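(* Let $\mathcal{P}=\langle P,\le\rangle$ be a finite bounded poset with $|P|\ge 2$. Then there exists $n\in\mathbb{N}$ such that $(R^+)^n(\mathcal{P})$ is a chain.
   Context: A poset is bounded if it has a least and a greatest element. The height $H$ of a finite poset is the number of elements in its largest chain. For $a\in P$, $\uparrow a=\{b:b\ge a\}$, $\downarrow a=\{b:b\le a\}$ as subposets; the standard interval rank is $R^+(a)=[H(\uparrow a)-1,\;H(\mathcal{P})-H(\downarrow a)]$. Weak order: $[x_*,x^*]\le_W[y_*,y^*]$ iff $x_*\le y_*$ and $x^*\le y^*$. The interval rank poset $R^+(\mathcal{P})$ is the set $\{R^+(a):a\in P\}$ ordered by $\ge_W$ (it is again a finite bounded poset); $(R^+)^n$ denotes the $n$-fold iteration of this construction. *)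

theory Defs
  imports Main
begin

type_synonym 'a poset = "'a set \<times> ('a \<Rightarrow> 'a \<Rightarrow> bool)"

definition chain_on :: "'a set \<Rightarrow> ('a \<Rightarrow> 'a \<Rightarrow> bool) \<Rightarrow> bool" where
  "chain_on C le \<longleftrightarrow> (\<forall>x\<in>C. \<forall>y\<in>C. le x y \<or> le y x)"

definition is_chain :: "'a poset \<Rightarrow> bool" where
  "is_chain P \<longleftrightarrow> chain_on (fst P) (snd P)"

definition finite_bounded_poset :: "'a poset \<Rightarrow> bool" where
  "finite_bounded_poset P \<longleftrightarrow>
     (let S = fst P; le = snd P in
       finite S \<and>
       (\<forall>x\<in>S. le x x) \<and>
       (\<forall>x\<in>S. \<forall>y\<in>S. le x y \<longrightarrow> le y x \<longrightarrow> x = y) \<and>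
       (\<forall>x\<in>S. \<forall>y\<in>S. \<forall>z\<in>S. le x y \<longrightarrow> le y z \<longrightarrow> le x z) \<and>
       (\<exists>b\<in>S. \<exists>t\<in>S. \<forall>x\<in>S. le b x \<and> le x t))"

definition height :: "'a set \<Rightarrow> ('a \<Rightarrow> 'a \<Rightarrow> bool) \<Rightarrow> nat" where
  "height S le = Max (card ` {C. C \<subseteq> S \<and> chain_on C le})"

definition up_set :: "'a set \<Rightarrow> ('a \<Rightarrow> 'a \<Rightarrow> bool) \<Rightarrow> 'a \<Rightarrow> 'a set" where
  "up_set S le a = {b\<in>S. le a b}"

definition down_set :: "'a set \<Rightarrow> ('a \<Rightarrow> 'a \<Rightarrow> bool) \<Rightarrow> 'a \<Rightarrow> 'a set" where
  "down_set S le a = {b\<in>S. le b a}"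

text \<open>Standard interval rank R+(a) = [H(up a) - 1, H(P) - H(down a)], as a pair.\<close>
definition interval_rank :: "'a poset \<Rightarrow> 'a \<Rightarrow> nat \<times> nat" where
  "interval_rank P a =
     (height (up_set (fst P) (snd P) a) (snd P) - 1,
      height (fst P) (snd P) - height (down_set (fst P) (snd P) a) (snd P))"

definition weak_le :: "nat \<times> nat \<Rightarrow> nat \<times> nat \<Rightarrow> bool" where
  "weak_le x y \<longleftrightarrow> fst x \<le> fst y \<and> snd x \<le> snd y"

definition Rplus :: "'a poset \<Rightarrow> (nat \<times> nat) poset" where
  "Rplus P = (interval_rank P ` fst P, \<lambda>x y. weak_le y x)"

end

theory Submission
  imports Defs
begin

text \<open>The interval rank map \<open>a \<mapsto> R\<^sup>+(a)\<close> is antitone for the weak order, since \<open>\<up>b \<subseteq> \<up>a\<close> and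
  \<open>\<down>a \<subseteq> \<down>b\<close> whenever \<open>a \<le> b\<close>. So it either identifies two elements, and \<open>R\<^sup>+(P)\<close> is smaller
  than \<open>P\<close>, or it is injective and \<open>R\<^sup>+(P)\<close> has at least as many comparable pairs as \<open>P\<close>. If
  neither quantity moves, the map is an order isomorphism onto \<open>R\<^sup>+(P)\<close>. The elements of a maximum
  chain of \<open>P\<close> realise every diagonal rank \<open>[k, k]\<close> with \<open>k < H(P)\<close>; an off-diagonal rank
  \<open>[l, h]\<close> would then lie above the chain \<open>[0, 0], \<dots>, [l, l], [l, h]\<close> of length \<open>l + 2\<close>,
  while \<open>H(\<up>a) = l + 1\<close>. Hence all ranks are diagonal and \<open>R\<^sup>+(P)\<close> is a chain. Lexicographic
  descent on the size and the number of unrelated ordered pairs ends the iteration.\<close>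

definition poset_on :: "'a set \<Rightarrow> ('a \<Rightarrow> 'a \<Rightarrow> bool) \<Rightarrow> bool" where
  "poset_on S le \<longleftrightarrow>
     (\<forall>x\<in>S. le x x) \<and>
     (\<forall>x\<in>S. \<forall>y\<in>S. le x y \<longrightarrow> le y x \<longrightarrow> x = y) \<and>
     (\<forall>x\<in>S. \<forall>y\<in>S. \<forall>z\<in>S. le x y \<longrightarrow> le y z \<longrightarrow> le x z)"

lemma poset_onD:
  assumes "poset_on S le"
  shows poset_on_refl: "x \<in> S \<Longrightarrow> le x x"
    and poset_on_antisym: "x \<in> S \<Longrightarrow> y \<in> S \<Longrightarrow> le x y \<Longrightarrow> le y x \<Longrightarrow> x = y"
    and poset_on_trans: "x \<in> S \<Longrightarrow> y \<in> S \<Longrightarrow> z \<in> S \<Longrightarrow> le x y \<Longrightarrow> le y z \<Longrightarrow> le x z"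
  using assms unfolding poset_on_def by blast+

lemma poset_on_dual: "poset_on S le \<Longrightarrow> poset_on S (\<lambda>x y. le y x)"
  unfolding poset_on_def by blast

lemma poset_on_reverse_weak_le: "poset_on S (\<lambda>x y. weak_le y x)"
  unfolding poset_on_def weak_le_def by auto

lemma finite_bounded_poset_imp_poset_on:
  "finite_bounded_poset P \<Longrightarrow> finite (fst P) \<and> poset_on (fst P) (snd P)"
  unfolding finite_bounded_poset_def poset_on_def Let_def by blast

lemma chain_on_subset: "chain_on C le \<Longrightarrow> D \<subseteq> C \<Longrightarrow> chain_on D le"
  unfolding chain_on_def by blast

text \<open>The duality lemmas are not simp rules: higher-order unification matches their left-hand
  sides against any order, so they are used with \<open>le\<close> instantiated.\<close>

lemma chain_on_dual: "chain_on C (\<lambda>x y. le y x) = chain_on C le"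
  unfolding chain_on_def by blast

lemma height_dual: "height S (\<lambda>x y. le y x) = height S le"
proof -
  have "{C. C \<subseteq> S \<and> chain_on C (\<lambda>x y. le y x)} = {C. C \<subseteq> S \<and> chain_on C le}"
    using chain_on_dual[of _ le] by blast
  then show ?thesis by (simp only: height_def)
qed

lemma down_set_dual: "down_set S le a = up_set S (\<lambda>x y. le y x) a"
  by (simp add: down_set_def up_set_def)

lemma finite_chains_on: "finite S \<Longrightarrow> finite {C. C \<subseteq> S \<and> chain_on C le}"
  by (rule finite_subset[of _ "Pow S"]) auto

lemma card_le_height:
  assumes "finite S" "C \<subseteq> S" "chain_on C le"
  shows "card C \<le> height S le"
  unfolding height_def using assms finite_chains_on[OF assms(1)] by (intro Max_ge) auto

lemma exists_chain_card_height:
  assumes "finite S"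
  obtains C where "C \<subseteq> S" "chain_on C le" "card C = height S le"
proof -
  have "{} \<in> {C. C \<subseteq> S \<and> chain_on C le}" by (simp add: chain_on_def)
  then have "height S le \<in> card ` {C. C \<subseteq> S \<and> chain_on C le}"
    unfolding height_def using finite_chains_on[OF assms] by (intro Max_in) auto
  then obtain C where "C \<subseteq> S" "chain_on C le" "card C = height S le" by auto
  then show ?thesis by (rule that)
qed

lemma height_mono:
  assumes "finite S" "T \<subseteq> S"
  shows "height T le \<le> height S le"
proof -
  obtain C where "C \<subseteq> T" "chain_on C le" "card C = height T le"
    using exists_chain_card_height[OF finite_subset[OF assms(2,1)]] by metis
  then show ?thesis using card_le_height[OF assms(1), of C le] assms(2) by auto
qed

lemma height_image_le:
  assumes "finite T" and reflect: "\<And>x y. x \<in> T \<Longrightarrow> y \<in> T \<Longrightarrow> le' (f x) (f y) \<Longrightarrow> le x y"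
  shows "height (f ` T) le' \<le> height T le"
proof -
  obtain C' where C': "C' \<subseteq> f ` T" "chain_on C' le'" "card C' = height (f ` T) le'"
    using exists_chain_card_height[OF finite_imageI[OF assms(1)]] by metis
  define C where "C = {x \<in> T. f x \<in> C'}"
  have "C \<subseteq> T" by (simp add: C_def)
  have "f ` C = C'" using C'(1) unfolding C_def by blast
  then have "card C' \<le> card C"
    using card_image_le[OF finite_subset[OF \<open>C \<subseteq> T\<close> assms(1)], of f] by simp
  moreover have "chain_on C le"
    unfolding chain_on_def
  proof (intro ballI)
    fix x y assume "x \<in> C" "y \<in> C"
    then show "le x y \<or> le y x"
      using C'(2) reflect unfolding C_def chain_on_def by blast
  qed
  then have "card C \<le> height T le" by (rule card_le_height[OF assms(1) \<open>C \<subseteq> T\<close>])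
  ultimately show ?thesis using C'(3) by simp
qed

lemma up_set_subset: "up_set S le a \<subseteq> S"
  by (auto simp: up_set_def)

lemma down_set_subset: "down_set S le a \<subseteq> S"
  by (auto simp: down_set_def)

lemma height_up_set_ge_1:
  assumes "finite S" "poset_on S le" "a \<in> S"
  shows "1 \<le> height (up_set S le a) le"
proof -
  have "le a a" using poset_on_refl[OF assms(2,3)] .
  then have "{a} \<subseteq> up_set S le a" "chain_on {a} le"
    using assms(3) by (auto simp: up_set_def chain_on_def)
  from card_le_height[OF finite_subset[OF up_set_subset assms(1)] this] show ?thesis by simp
qed

lemma height_down_set_ge_1:
  assumes "finite S" "poset_on S le" "a \<in> S"
  shows "1 \<le> height (down_set S le a) le"
  using height_up_set_ge_1[OF assms(1) poset_on_dual[OF assms(2)] assms(3)]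
  unfolding down_set_dual[of S le] height_dual[of _ le] .

lemma height_up_set_antimono:
  assumes "finite S" "poset_on S le" "a \<in> S" "b \<in> S" "le a b"
  shows "height (up_set S le b) le \<le> height (up_set S le a) le"
proof (rule height_mono[OF finite_subset[OF up_set_subset assms(1)]])
  show "up_set S le b \<subseteq> up_set S le a"
    using poset_on_trans[OF assms(2,3,4)] assms(5) by (auto simp: up_set_def)
qed

lemma height_down_set_mono:
  assumes "finite S" "poset_on S le" "a \<in> S" "b \<in> S" "le a b"
  shows "height (down_set S le a) le \<le> height (down_set S le b) le"
  using height_up_set_antimono[OF assms(1) poset_on_dual[OF assms(2)] assms(4,3,5)]
  unfolding down_set_dual[of S le] height_dual[of _ le] .

lemma height_up_set_strict_antimono:
  assumes "finite S" "poset_on S le" "a \<in> S" "b \<in> S" "le a b" "a \<noteq> b"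
  shows "height (up_set S le b) le < height (up_set S le a) le"
proof -
  have fin: "finite (up_set S le b)" using finite_subset[OF up_set_subset assms(1)] .
  obtain C where C: "C \<subseteq> up_set S le b" "chain_on C le" "card C = height (up_set S le b) le"
    using exists_chain_card_height[OF fin] by metis
  have b_le: "c \<in> S \<and> le b c" if "c \<in> C" for c
    using C(1) that by (auto simp: up_set_def)
  then have a_le: "le a c" if "c \<in> C" for c
    using poset_on_trans[OF assms(2,3,4)] assms(5) that by blast
  have "a \<notin> C"
    using b_le poset_on_antisym[OF assms(2,3,4,5)] assms(6) by blast
  moreover have "insert a C \<subseteq> up_set S le a" "chain_on (insert a C) le"
    using C b_le a_le assms(3) poset_on_refl[OF assms(2,3)] by (auto simp: up_set_def chain_on_def)
  then have "card (insert a C) \<le> height (up_set S le a) le"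
    using card_le_height[OF finite_subset[OF up_set_subset assms(1)]] by blast
  ultimately show ?thesis
    using C(3) finite_subset[OF C(1) fin] by simp
qed

lemma card_chain_through:
  assumes "finite C" "chain_on C le" "poset_on S le" "C \<subseteq> S" "a \<in> C"
  shows "card (C \<inter> up_set S le a) + card (C \<inter> down_set S le a) = card C + 1"
proof -
  let ?A = "C \<inter> up_set S le a" and ?B = "C \<inter> down_set S le a"
  have aS: "a \<in> S" using assms(4,5) by blast
  have "?A \<union> ?B = C"
    using assms(2,4,5) unfolding chain_on_def up_set_def down_set_def by blast
  moreover have "?A \<inter> ?B = {a}"
    using assms(4,5) poset_on_antisym[OF assms(3) aS] poset_on_refl[OF assms(3) aS]
    unfolding up_set_def down_set_def by blast
  ultimately show ?thesis
    using card_Un_Int[of ?A ?B] assms(1) by simp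
qed

lemma height_up_set_plus_height_down_set:
  assumes "finite S" "poset_on S le" "a \<in> S"
  shows "height (up_set S le a) le + height (down_set S le a) le \<le> height S le + 1"
proof -
  obtain A where A: "A \<subseteq> up_set S le a" "chain_on A le" "card A = height (up_set S le a) le"
    using exists_chain_card_height[OF finite_subset[OF up_set_subset assms(1)]] by metis
  obtain B where B: "B \<subseteq> down_set S le a" "chain_on B le" "card B = height (down_set S le a) le"
    using exists_chain_card_height[OF finite_subset[OF down_set_subset assms(1)]] by metis
  have "le y x" if "x \<in> A" "y \<in> B" for x y
    using that A(1) B(1) poset_on_trans[OF assms(2) _ assms(3)] by (auto simp: up_set_def down_set_def)
  then have "chain_on (A \<union> B) le"
    using A(2) B(2) unfolding chain_on_def by blast
  then have "card (A \<union> B) \<le> height S le"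
    using A(1) B(1) up_set_subset[of S le a] down_set_subset[of S le a]
      card_le_height[OF assms(1)] by (meson le_sup_iff subset_trans)
  moreover have "A \<inter> B \<subseteq> {a}"
    using A(1) B(1) poset_on_antisym[OF assms(2,3)] by (auto simp: up_set_def down_set_def)
  then have "card (A \<inter> B) \<le> 1"
    using card_mono[of "{a}" "A \<inter> B"] by simp
  moreover have "finite A" "finite B"
    using finite_subset[OF A(1) finite_subset[OF up_set_subset assms(1)]]
      finite_subset[OF B(1) finite_subset[OF down_set_subset assms(1)]] .
  then have "card A + card B = card (A \<union> B) + card (A \<inter> B)"
    by (rule card_Un_Int)
  ultimately show ?thesis using A(3) B(3) by linarith
qed

lemma interval_rank_eq: "interval_rank (S, le) a =
    (height (up_set S le a) le - 1, height S le - height (down_set S le a) le)"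
  by (simp add: interval_rank_def)

lemma interval_rank_on_maximum_chain:
  assumes "finite S" "poset_on S le" "C \<subseteq> S" "chain_on C le" "card C = height S le" "c \<in> C"
  shows "interval_rank (S, le) c = (height (up_set S le c) le - 1, height (up_set S le c) le - 1)"
proof -
  have cS: "c \<in> S" using assms(3,6) by blast
  have "card (C \<inter> up_set S le c) \<le> height (up_set S le c) le"
    using chain_on_subset[OF assms(4)]
    by (intro card_le_height[OF finite_subset[OF up_set_subset assms(1)]]) auto
  moreover have "card (C \<inter> down_set S le c) \<le> height (down_set S le c) le"
    using chain_on_subset[OF assms(4)]
    by (intro card_le_height[OF finite_subset[OF down_set_subset assms(1)]]) auto
  moreover note card_chain_through[OF finite_subset[OF assms(3,1)] assms(4,2,3,6)]
    height_up_set_plus_height_down_set[OF assms(1,2) cS]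
  ultimately have "height (up_set S le c) le + height (down_set S le c) le = height S le + 1"
    using assms(5) by linarith
  then show ?thesis by (simp add: interval_rank_eq)
qed

lemma exists_diagonal_interval_rank:
  assumes "finite S" "poset_on S le" "k < height S le"
  shows "\<exists>c\<in>S. interval_rank (S, le) c = (k, k)"
proof -
  obtain C where C: "C \<subseteq> S" "chain_on C le" "card C = height S le"
    using exists_chain_card_height[OF assms(1)] by metis
  define u where "u c = height (up_set S le c) le" for c
  have "inj_on u C"
  proof (rule inj_onI, rule ccontr)
    fix x y assume xy: "x \<in> C" "y \<in> C" "u x = u y" "x \<noteq> y"
    then have "le x y \<or> le y x" using C(2) unfolding chain_on_def by blast
    then show False
      using height_up_set_strict_antimono[OF assms(1,2), of x y]
        height_up_set_strict_antimono[OF assms(1,2), of y x] xy C(1)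
      unfolding u_def by auto
  qed
  moreover have "u ` C \<subseteq> {1..height S le}"
    using C(1) height_up_set_ge_1[OF assms(1,2)] height_mono[OF assms(1) up_set_subset]
    unfolding u_def by fastforce
  ultimately have "u ` C = {1..height S le}"
    using card_subset_eq[of "{1..height S le}" "u ` C"] card_image[of u C] C(3) by simp
  then obtain c where "c \<in> C" "u c = k + 1"
    using assms(3) by (metis Suc_eq_plus1 Suc_leI atLeastAtMost_iff imageE le_add2)
  then show ?thesis
    using interval_rank_on_maximum_chain[OF assms(1,2) C] C(1) unfolding u_def by force
qed

lemma interval_rank_antimono:
  assumes "finite S" "poset_on S le" "a \<in> S" "b \<in> S" "le a b"
  shows "weak_le (interval_rank (S, le) b) (interval_rank (S, le) a)"
  using height_up_set_antimono[OF assms] height_down_set_mono[OF assms]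
  by (simp add: interval_rank_eq weak_le_def diff_le_mono diff_le_mono2)

lemma interval_rank_bounds:
  assumes "finite S" "poset_on S le" "a \<in> S"
  shows "fst (interval_rank (S, le) a) \<le> snd (interval_rank (S, le) a)"
    and "snd (interval_rank (S, le) a) < height S le"
  using height_up_set_plus_height_down_set[OF assms] height_up_set_ge_1[OF assms]
    height_down_set_ge_1[OF assms] by (auto simp: interval_rank_eq)

lemma interval_rank_diagonal_if_reflecting:
  assumes fin: "finite S" and po: "poset_on S le" and aS: "a \<in> S"
    and reflect: "\<And>x y. x \<in> S \<Longrightarrow> y \<in> S \<Longrightarrow>
      weak_le (interval_rank (S, le) y) (interval_rank (S, le) x) \<Longrightarrow> le x y"
  shows "fst (interval_rank (S, le) a) = snd (interval_rank (S, le) a)"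
proof (rule ccontr)
  define f where "f = interval_rank (S, le)"
  define leQ :: "nat \<times> nat \<Rightarrow> nat \<times> nat \<Rightarrow> bool" where "leQ x y \<longleftrightarrow> weak_le y x" for x y
  obtain l h where fa: "f a = (l, h)" by fastforce
  assume "fst (interval_rank (S, le) a) \<noteq> snd (interval_rank (S, le) a)"
  then have "l < h" "h < height S le"
    using interval_rank_bounds[OF fin po aS] fa unfolding f_def by auto
  define D where "D = (\<lambda>k. (k, k)) ` {0..l} \<union> {(l, h)}"
  have "D \<subseteq> up_set (f ` S) leQ (f a)"
  proof -
    have "(k, k) \<in> f ` S" if "k \<le> l" for k
      using exists_diagonal_interval_rank[OF fin po] that \<open>l < h\<close> \<open>h < height S le\<close>
      unfolding f_def by (metis image_iff le_less_trans order.strict_trans)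
    moreover have "(l, h) \<in> f ` S" using aS fa by (metis imageI)
    ultimately show ?thesis
      using fa \<open>l < h\<close> by (auto simp: D_def up_set_def leQ_def weak_le_def)
  qed
  moreover have "chain_on D leQ"
    using \<open>l < h\<close> by (auto simp: D_def chain_on_def leQ_def weak_le_def)
  moreover have "card D = l + 2"
  proof -
    have "(l, h) \<notin> (\<lambda>k. (k, k)) ` {0..l}" using \<open>l < h\<close> by auto
    moreover have "card ((\<lambda>k. (k, k)) ` {0..l}) = l + 1"
      by (simp add: card_image inj_on_def)
    ultimately show ?thesis by (simp add: D_def)
  qed
  ultimately have "l + 2 \<le> height (up_set (f ` S) leQ (f a)) leQ"
    using card_le_height[OF finite_subset[OF up_set_subset finite_imageI[OF fin]]] by metis
  also have "\<dots> \<le> height (f ` up_set S le a) leQ"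
  proof (rule height_mono)
    show "up_set (f ` S) leQ (f a) \<subseteq> f ` up_set S le a"
      using reflect aS unfolding f_def up_set_def leQ_def by auto
  qed (use fin in \<open>simp add: up_set_def\<close>)
  also have "\<dots> \<le> height (up_set S le a) le"
    using reflect unfolding f_def leQ_def up_set_def
    by (intro height_image_le) (use fin in auto)
  also have "\<dots> = l + 1"
    using fa height_up_set_ge_1[OF fin po aS] unfolding f_def interval_rank_eq by auto
  finally show False by simp
qed

lemma Rplus_pair: "Rplus (S, le) = (interval_rank (S, le) ` S, \<lambda>x y. weak_le y x)"
  by (simp add: Rplus_def)

lemma is_chain_Rplus_if_reflecting:
  assumes "finite S" "poset_on S le"
    and "\<And>x y. x \<in> S \<Longrightarrow> y \<in> S \<Longrightarrow>
      weak_le (interval_rank (S, le) y) (interval_rank (S, le) x) \<Longrightarrow> le x y"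
  shows "is_chain (Rplus (S, le))"
  using interval_rank_diagonal_if_reflecting[OF assms(1,2) _ assms(3)]
  by (auto simp: is_chain_def Rplus_pair chain_on_def weak_le_def)

definition related_pairs :: "'a set \<Rightarrow> ('a \<Rightarrow> 'a \<Rightarrow> bool) \<Rightarrow> ('a \<times> 'a) set" where
  "related_pairs S le = {(x, y) \<in> S \<times> S. le x y}"

lemma finite_related_pairs: "finite S \<Longrightarrow> finite (related_pairs S le)"
  by (rule finite_subset[of _ "S \<times> S"]) (auto simp: related_pairs_def)

lemma card_related_pairs_le: "finite S \<Longrightarrow> card (related_pairs S le) \<le> card S * card S"
  using card_mono[of "S \<times> S" "related_pairs S le"] by (auto simp: related_pairs_def card_cartesian_product)

lemma related_pairs_image:
  assumes "inj_on f S" "\<And>x y. x \<in> S \<Longrightarrow> y \<in> S \<Longrightarrow> le x y \<Longrightarrow> le' (f x) (f y)"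
  shows "inj_on (map_prod f f) (related_pairs S le)"
    and "map_prod f f ` related_pairs S le \<subseteq> related_pairs (f ` S) le'"
  using assms by (auto simp: related_pairs_def inj_on_def)

lemma reflects_if_card_related_pairs_image_le:
  assumes "finite S" "inj_on f S" "\<And>x y. x \<in> S \<Longrightarrow> y \<in> S \<Longrightarrow> le x y \<Longrightarrow> le' (f x) (f y)"
    and "card (related_pairs (f ` S) le') \<le> card (related_pairs S le)"
    and "x \<in> S" "y \<in> S" "le' (f x) (f y)"
  shows "le x y"
proof -
  have inj: "inj_on (map_prod f f) (related_pairs S le)"
    using assms(2,3) by (rule related_pairs_image)
  have sub: "map_prod f f ` related_pairs S le \<subseteq> related_pairs (f ` S) le'"
    using assms(2,3) by (rule related_pairs_image)
  have fin: "finite (related_pairs (f ` S) le')"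
    using assms(1) by (simp add: finite_related_pairs)
  have "map_prod f f ` related_pairs S le = related_pairs (f ` S) le'"
    using card_subset_eq[OF fin sub] card_mono[OF fin sub] card_image[OF inj] assms(4) by simp
  then have "(f x, f y) \<in> map_prod f f ` related_pairs S le"
    using assms(5-7) by (auto simp: related_pairs_def)
  then show ?thesis
    using assms(2,5,6) by (auto simp: related_pairs_def inj_on_def)
qed

lemma Rplus_shrinks_or_gains_related_pairs:
  assumes "finite S" "poset_on S le" "\<not> is_chain (Rplus (S, le))"
  shows "card (interval_rank (S, le) ` S) < card S \<or>
    card (interval_rank (S, le) ` S) = card S \<and>
    card (related_pairs S le) < card (related_pairs (interval_rank (S, le) ` S) (\<lambda>x y. weak_le y x))"
proof (rule ccontr)
  let ?f = "interval_rank (S, le)"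
  have mono: "\<And>x y. x \<in> S \<Longrightarrow> y \<in> S \<Longrightarrow> le x y \<Longrightarrow> weak_le (?f y) (?f x)"
    using interval_rank_antimono[OF assms(1,2)] .
  assume "\<not> ?thesis"
  then have "card (?f ` S) = card S"
    and card_le: "card (related_pairs (?f ` S) (\<lambda>x y. weak_le y x)) \<le> card (related_pairs S le)"
    using card_image_le[OF assms(1), of ?f] by auto
  then have inj: "inj_on ?f S" using eq_card_imp_inj_on[OF assms(1)] by blast
  have "is_chain (Rplus (S, le))"
    using reflects_if_card_related_pairs_image_le[OF assms(1) inj _ card_le] mono
    by (intro is_chain_Rplus_if_reflecting[OF assms(1,2)]) blast
  with assms(3) show False ..
qed

lemma is_chain_iterated_Rplus:
  fixes S :: "(nat \<times> nat) set"
  assumes "finite S" "poset_on S le"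
  shows "\<exists>m. is_chain ((Rplus ^^ m) (S, le))"
  using assms
proof (induction "(S, le)" arbitrary: S le rule: wf_induct_rule[OF wf_measures[of
    "[\<lambda>(S, le). card S, \<lambda>(S, le). card S * card S - card (related_pairs S le)]"]])
  case (1 S le)
  let ?S' = "interval_rank (S, le) ` S" and ?le' = "\<lambda>x y. weak_le y x"
  show ?case
  proof (cases "is_chain (Rplus (S, le))")
    case True
    then have "is_chain ((Rplus ^^ 1) (S, le))" by simp
    then show ?thesis ..
  next
    case False
    have "finite ?S'" using "1.prems"(1) by simp
    moreover have "((?S', ?le'), (S, le)) \<in> measures
        [\<lambda>(S, le). card S, \<lambda>(S, le). card S * card S - card (related_pairs S le)]"
      using Rplus_shrinks_or_gains_related_pairs[OF "1.prems" False]
        card_related_pairs_le[OF \<open>finite ?S'\<close>, of ?le'] by auto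
    ultimately obtain m where "is_chain ((Rplus ^^ m) (?S', ?le'))"
      using "1.hyps" poset_on_reverse_weak_le by blast
    then have "is_chain ((Rplus ^^ Suc m) (S, le))"
      by (simp add: funpow_Suc_right Rplus_pair del: funpow.simps)
    then show ?thesis ..
  qed
qed

theorem proposition9:
  fixes P :: "'a poset"
  assumes "finite_bounded_poset P"
    and "card (fst P) \<ge> 2"
  shows "is_chain P \<or> (\<exists>m. is_chain ((Rplus ^^ m) (Rplus P)))"
proof -
  obtain S le where P: "P = (S, le)" by fastforce
  have "finite S" "poset_on S le"
    using finite_bounded_poset_imp_poset_on[OF assms(1)] P by auto
  then have "\<exists>m. is_chain ((Rplus ^^ m) (interval_rank (S, le) ` S, \<lambda>x y. weak_le y x))"
    by (intro is_chain_iterated_Rplus poset_on_reverse_weak_le finite_imageI)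
  then show ?thesis by (simp add: P Rplus_pair)
qed

end
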